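(* Let $k$ be a positive integer, $a\in\mathbb C\setminus\mathbb Z_0^-$, and let $s\in\mathbb C$ be arbitrary when $|z|<1$, or $\Re(s)>k$ when $|z|=1$. Then $$\Phi_k(z,s,a)=\frac1{a^s}+\sum_{r=0}^{k-1}\binom{k}{r} z^{k-r}\,\Phi_{k-r}\bigl(z,s,a+(k-r)\bigr).$$
   Context: $\mathbb Z_0^-=\{0,-1,-2,\ldots\}$. The multiple Hurwitz-Lerch zeta function of order $k$ is $\Phi_k(z,s,a)=\sum_{m_1,\ldots,m_k=0}^\infty\frac{z^{m_1+\dots+m_k}}{(m_1+\dots+m_k+a)^{s}}$ for $a\in\mathbb C\setminus\mathbb Z_0^-$, with $s\in\mathbb C$ when $|z|<1$ and $\Re(s)>k$ when $|z|=1$. *)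

theory Defs
  imports "HOL-Analysis.Analysis"
begin

definition Phi :: "nat \<Rightarrow> complex \<Rightarrow> complex \<Rightarrow> complex \<Rightarrow> complex" where
  "Phi k z s a = (\<Sum>\<^sub>\<infinity>m\<in>{m :: nat list. length m = k}.
      z ^ sum_list m / (of_nat (sum_list m) + a) powr s)"

end

theory Submission
  imports Defs "HOL-Real_Asymp.Real_Asymp"
begin

text \<open>Classify the k-tuples (m_1, ..., m_k) by the set of positions where m_i > 0. If j
  coordinates are positive, subtracting 1 from each of them leaves an arbitrary j-tuple whose sum is
  smaller by j, so these tuples contribute z^j \<Phi>_j(z, s, a + j); there are (k choose j) such
  position sets, and j = 0 gives the single term a^{-s}. Rearranging the series this way needs
  absolute convergence, which follows by comparing the terms with a product
  \<Prod>i g(m_i) of a summable one-variable majorant g: a geometric sequence if |z| < 1, and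
  (n + 1)^{-t} with 1 < t \<le> Re s / k if |z| = 1.\<close>

lemma bij_betw_Cons_lists_length:
  "bij_betw (\<lambda>(x, xs). x # xs) (UNIV \<times> {xs. length xs = n}) {xs. length xs = Suc n}"
  by (rule bij_betwI[where g = "\<lambda>xs. (hd xs, tl xs)"]) (auto simp: length_Suc_conv)

lemma has_sum_prod_list_lists_length:
  fixes g :: "'a \<Rightarrow> real"
  assumes nonneg: "\<And>x. g x \<ge> 0" and g: "(g has_sum S) UNIV"
  shows "((\<lambda>xs. prod_list (map g xs)) has_sum S ^ n) {xs. length xs = n}"
proof (induction n)
  case 0
  have "{xs :: 'a list. length xs = 0} = {[]}" by auto
  then show ?case using has_sum_finite[of "{[]}" "\<lambda>xs. prod_list (map g xs)"] by simp
next
  case (Suc n)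
  let ?P = "\<lambda>xs. prod_list (map g xs)"
  have fibre: "((\<lambda>xs. ?P (x # xs)) has_sum g x * S ^ n) {xs. length xs = n}" for x
    using has_sum_cmult_right[OF Suc.IH, of "g x"] by simp
  have "((\<lambda>(x, xs). ?P (x # xs)) has_sum S * S ^ n) (UNIV \<times> {xs. length xs = n})"
  proof (rule has_sum_SigmaI[OF _ has_sum_cmult_left[OF g]])
    show "((\<lambda>xs. case (x, xs) of (x, xs) \<Rightarrow> ?P (x # xs)) has_sum g x * S ^ n) {xs. length xs = n}" for x
      using fibre by simp
    show "(\<lambda>(x, xs). ?P (x # xs)) summable_on UNIV \<times> {xs. length xs = n}"
      by (rule summable_on_SigmaI[OF _ summable_on_cmult_left[OF has_sum_imp_summable[OF g]]])
         (use fibre nonneg in \<open>auto intro!: mult_nonneg_nonneg prod_list_nonneg\<close>)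
  qed
  then show ?case
    using has_sum_reindex_bij_betw[OF bij_betw_Cons_lists_length, of ?P]
    by (simp add: case_prod_unfold)
qed

lemma sum_bool_lists_count_True:
  fixes F :: "nat \<Rightarrow> 'a::comm_semiring_1"
  shows "(\<Sum>b\<in>{b::bool list. length b = k}. F (count_list b True)) = (\<Sum>j\<le>k. of_nat (k choose j) * F j)"
proof (induction k arbitrary: F)
  case 0
  have "{b::bool list. length b = 0} = {[]}" by auto
  then show ?case by simp
next
  case (Suc k)
  have "(\<Sum>b\<in>{b::bool list. length b = Suc k}. F (count_list b True))
      = (\<Sum>(x, b)\<in>UNIV \<times> {b. length b = k}. F (count_list (x # b) True))"
    using sum.reindex_bij_betw[OF bij_betw_Cons_lists_length, of "\<lambda>b. F (count_list b True)"]
    by (simp add: case_prod_unfold)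
  also have "\<dots> = (\<Sum>b | length b = k. F (count_list b True)) + (\<Sum>b | length b = k. F (Suc (count_list b True)))"
    by (simp add: sum.cartesian_product[symmetric] UNIV_bool add.commute)
  also have "\<dots> = (\<Sum>j\<le>k. of_nat (k choose j) * F j) + (\<Sum>j\<le>k. of_nat (k choose j) * F (Suc j))"
    using Suc.IH[of F] Suc.IH[of "\<lambda>j. F (Suc j)"] by simp
  also have "(\<Sum>j\<le>k. of_nat (k choose j) * F j) = F 0 + (\<Sum>j\<le>k. of_nat (k choose Suc j) * F (Suc j))"
  proof -
    have "(\<Sum>j\<le>k. of_nat (k choose j) * F j) = (\<Sum>j\<le>Suc k. of_nat (k choose j) * F j)"
      by (simp add: binomial_eq_0)
    then show ?thesis by (simp only: sum.atMost_Suc_shift) simp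
  qed
  also have "F 0 + (\<Sum>j\<le>k. of_nat (k choose Suc j) * F (Suc j)) + (\<Sum>j\<le>k. of_nat (k choose j) * F (Suc j))
      = (\<Sum>j\<le>Suc k. of_nat (Suc k choose j) * F j)"
    by (subst sum.atMost_Suc_shift) (simp add: sum.distrib[symmetric] algebra_simps)
  finally show ?case .
qed

text \<open>A tuple is encoded by its mask of nonzero positions and the list of its nonzero entries
  minus one; \<open>fill_mask\<close> decodes.\<close>

fun fill_mask :: "bool list \<Rightarrow> nat list \<Rightarrow> nat list" where
  "fill_mask [] ms = []"
| "fill_mask (False # b) ms = 0 # fill_mask b ms"
| "fill_mask (True # b) ms = Suc (hd ms) # fill_mask b (tl ms)"

definition unfill_mask :: "nat list \<Rightarrow> bool list \<times> nat list" where
  "unfill_mask l = (map (\<lambda>x. x \<noteq> 0) l, map (\<lambda>x. x - 1) (filter (\<lambda>x. x \<noteq> 0) l))"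

lemma length_fill_mask [simp]: "length (fill_mask b ms) = length b"
  by (induction b ms rule: fill_mask.induct) auto

lemma sum_list_fill_mask:
  "length ms = count_list b True \<Longrightarrow> sum_list (fill_mask b ms) = sum_list ms + count_list b True"
  by (induction b ms rule: fill_mask.induct) (auto simp: length_Suc_conv)

lemma unfill_fill_mask:
  "length ms = count_list b True \<Longrightarrow> unfill_mask (fill_mask b ms) = (b, ms)"
  by (induction b ms rule: fill_mask.induct) (auto simp: unfill_mask_def length_Suc_conv)

lemma fill_unfill_mask: "case_prod fill_mask (unfill_mask l) = l"
  by (induction l) (auto simp: unfill_mask_def)

lemma unfill_mask_in_Sigma:
  "unfill_mask l \<in> (SIGMA b:{b. length b = length l}. {ms. length ms = count_list b True})"
  by (induction l) (auto simp: unfill_mask_def)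

lemma bij_betw_fill_mask:
  "bij_betw (case_prod fill_mask)
     (SIGMA b:{b. length b = k}. {ms. length ms = count_list b True}) {l. length l = k}"
  by (rule bij_betwI[where g = unfill_mask])
     (auto simp: unfill_fill_mask fill_unfill_mask unfill_mask_in_Sigma)

lemma power_times_powr_le_geometric:
  fixes r \<sigma> :: real
  assumes "0 \<le> r" "r < 1"
  obtains B \<rho> where "0 < \<rho>" "\<rho> < 1" "\<And>n. r ^ n * (real n + 1) powr \<sigma> \<le> B * \<rho> ^ n"
proof -
  define \<rho> where "\<rho> = (3 + r) / 4"
  define q where "q = (1 + r) / (2 * \<rho>)"
  have \<rho>: "0 < \<rho>" "\<rho> < 1" and q: "0 < q" "q < 1"
    using assms by (auto simp: \<rho>_def q_def field_simps)
  have r: "r \<le> q * \<rho>"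
    using assms \<rho> by (simp add: q_def)
  have "(\<lambda>n. (real n + 1) powr \<sigma> * q ^ n) \<longlonglongrightarrow> 0"
    using q by real_asymp
  then have "Bseq (\<lambda>n. (real n + 1) powr \<sigma> * q ^ n)"
    by (rule convergent_imp_Bseq[OF convergentI])
  then obtain B where B: "\<And>n. norm ((real n + 1) powr \<sigma> * q ^ n) \<le> B"
    by (auto simp: Bseq_def)
  have "r ^ n * (real n + 1) powr \<sigma> \<le> B * \<rho> ^ n" for n
  proof -
    have "r ^ n * (real n + 1) powr \<sigma> \<le> (q * \<rho>) ^ n * (real n + 1) powr \<sigma>"
      using assms r by (intro mult_right_mono power_mono) auto
    also have "\<dots> = ((real n + 1) powr \<sigma> * q ^ n) * \<rho> ^ n"
      by (simp add: power_mult_distrib)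
    also have "\<dots> \<le> B * \<rho> ^ n"
      using B[of n] \<rho> by (intro mult_right_mono) auto
    finally show ?thesis .
  qed
  with \<rho> that show ?thesis by blast
qed

lemma powr_sum_list_le_prod_list:
  fixes t \<sigma> :: real
  assumes "0 \<le> t" "t * length m \<le> \<sigma>"
  shows "(real (sum_list m) + 1) powr (- \<sigma>) \<le> prod_list (map (\<lambda>x. (real x + 1) powr (- t)) m)"
proof -
  have "(real (sum_list m) + 1) powr (- \<sigma>) \<le> (real (sum_list m) + 1) powr (- (t * length m))"
    using assms by (intro powr_mono) auto
  also have "\<dots> \<le> prod_list (map (\<lambda>x. (real x + 1) powr (- t)) m)"
  proof (induction m)
    case Nil then show ?case by simp
  next
    case (Cons x m)
    have "(real (sum_list (x # m)) + 1) powr (- (t * length (x # m)))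
        = (real x + real (sum_list m) + 1) powr (- t) * (real x + real (sum_list m) + 1) powr (- (t * length m))"
      by (simp add: algebra_simps powr_add[symmetric])
    also have "\<dots> \<le> (real x + 1) powr (- t) * (real (sum_list m) + 1) powr (- (t * length m))"
      using \<open>0 \<le> t\<close> by (intro mult_mono powr_mono2') auto
    also have "\<dots> \<le> (real x + 1) powr (- t) * prod_list (map (\<lambda>x. (real x + 1) powr (- t)) m)"
      using Cons.IH by (intro mult_left_mono) auto
    finally show ?case by simp
  qed
  finally show ?thesis .
qed

lemma powr_le_max_powr:
  fixes x y c C t :: real
  assumes "0 < c" "0 < x" "c * x \<le> y" "y \<le> C * x"
  shows "y powr t \<le> max (c powr t) (C powr t) * x powr t"
proof -
  have "0 < c * x"
    using assms by simp
  then have "0 < y"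
    using assms by linarith
  show ?thesis
  proof (cases "t \<ge> 0")
    case True
    have "y powr t \<le> (C * x) powr t"
      using assms True \<open>0 < y\<close> by (intro powr_mono2) auto
    also have "\<dots> = C powr t * x powr t"
      using assms by (simp add: powr_mult)
    also have "\<dots> \<le> max (c powr t) (C powr t) * x powr t"
      by (intro mult_right_mono) auto
    finally show ?thesis .
  next
    case False
    have "y powr t \<le> (c * x) powr t"
      using assms False by (intro powr_mono2') auto
    also have "\<dots> = c powr t * x powr t"
      using assms by (simp add: powr_mult)
    also have "\<dots> \<le> max (c powr t) (C powr t) * x powr t"
      by (intro mult_right_mono) auto
    finally show ?thesis .
  qed
qed

lemma norm_of_nat_plus_ge_linear:
  fixes a :: complex
  assumes "a \<notin> \<int>\<^sub>\<le>\<^sub>0"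
  obtains c where "c > 0" "\<And>n. c * (real n + 1) \<le> norm (of_nat n + a)"
proof -
  have nz: "of_nat n + a \<noteq> 0" for n
    using assms plus_of_nat_eq_0_imp[of a n] by (auto simp: add.commute)
  define N where "N = nat \<lceil>2 * norm a\<rceil> + 1"
  define c0 where "c0 = Min ((\<lambda>n. norm (of_nat n + a) / (real n + 1)) ` {..<N})"
  have "c0 > 0" unfolding c0_def
    using nz by (subst Min_gr_iff) (auto simp: N_def)
  define c where "c = min (1/2) c0"
  have "c * (real n + 1) \<le> norm (of_nat n + a)" for n
  proof (cases "n < N")
    case True
    have "c \<le> norm (of_nat n + a) / (real n + 1)"
      unfolding c_def c0_def using True by (intro min.coboundedI2 Min_le) auto
    then show ?thesis by (simp add: field_simps)
  next
    case False
    then have "real n \<ge> 2 * norm a + 1" unfolding N_def by linarith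
    moreover have "norm (of_nat n + a) \<ge> real n - norm a"
      using norm_diff_ineq[of "of_nat n :: complex" a] by simp
    moreover have "c * (real n + 1) \<le> (1/2) * (real n + 1)"
      by (intro mult_right_mono) (auto simp: c_def)
    ultimately show ?thesis by argo
  qed
  moreover have "c > 0" using \<open>c0 > 0\<close> by (simp add: c_def)
  ultimately show ?thesis using that by blast
qed

lemma norm_powr_complex_ge:
  fixes w s :: complex
  assumes "w \<noteq> 0"
  shows "norm w powr Re s / exp (\<bar>Im s\<bar> * pi) \<le> norm (w powr s)"
proof -
  have "Im s * Arg w \<le> \<bar>Im s\<bar> * \<bar>Arg w\<bar>"
    by (metis abs_ge_self abs_mult)
  also have "\<dots> \<le> \<bar>Im s\<bar> * pi"
    using Arg_bounded[of w] by (intro mult_left_mono) auto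
  finally have "Im s * Arg w \<le> \<bar>Im s\<bar> * pi" .
  then have "exp (- (\<bar>Im s\<bar> * pi)) \<le> exp (- Im s * Arg w)" by simp
  then have "norm w powr Re s * exp (- (\<bar>Im s\<bar> * pi)) \<le> norm w powr Re s * exp (- Im s * Arg w)"
    by (intro mult_left_mono) auto
  then show ?thesis by (simp add: norm_powr_complex exp_minus field_simps)
qed

lemma norm_Lerch_term_le:
  fixes z s a :: complex
  assumes "a \<notin> \<int>\<^sub>\<le>\<^sub>0"
  obtains C where "C \<ge> 0"
    "\<And>n. norm (z ^ n / (of_nat n + a) powr s) \<le> C * (norm z ^ n * (real n + 1) powr (- Re s))"
proof -
  obtain c where c: "c > 0" "\<And>n. c * (real n + 1) \<le> norm (of_nat n + a)"
    using norm_of_nat_plus_ge_linear[OF assms] by blast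
  define E where "E = exp (\<bar>Im s\<bar> * pi)"
  define D where "D = max (c powr (- Re s)) ((1 + norm a) powr (- Re s))"
  have "norm (z ^ n / (of_nat n + a) powr s) \<le> E * D * (norm z ^ n * (real n + 1) powr (- Re s))" for n
  proof -
    define w where "w = of_nat n + a"
    have "norm w \<le> real n + norm a"
      using norm_triangle_ineq[of "of_nat n :: complex" a] by (simp add: w_def)
    also have "\<dots> \<le> (1 + norm a) * (real n + 1)"
      by (simp add: algebra_simps)
    finally have D: "norm w powr (- Re s) \<le> D * (real n + 1) powr (- Re s)"
      unfolding D_def using c by (intro powr_le_max_powr) (auto simp: w_def)
    have "w \<noteq> 0"
      using c(2)[of n] mult_pos_pos[OF c(1), of "real n + 1"] by (auto simp: w_def)
    have "norm (z ^ n / w powr s) = norm z ^ n / norm (w powr s)"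
      by (simp add: norm_divide norm_power)
    also have "\<dots> \<le> norm z ^ n / (norm w powr Re s / E)"
      using norm_powr_complex_ge[OF \<open>w \<noteq> 0\<close>, of s] \<open>w \<noteq> 0\<close>
      by (intro divide_left_mono) (auto simp: E_def)
    also have "\<dots> = E * (norm z ^ n * norm w powr (- Re s))"
      by (simp add: powr_minus field_simps)
    also have "\<dots> \<le> E * (norm z ^ n * (D * (real n + 1) powr (- Re s)))"
      using D by (intro mult_left_mono) (auto simp: E_def)
    finally show ?thesis by (simp add: w_def mult_ac)
  qed
  moreover have "E * D \<ge> 0"
    unfolding E_def D_def by (intro mult_nonneg_nonneg max.coboundedI1) auto
  ultimately show ?thesis using that by blast
qed

lemma prod_list_majorant:
  fixes r \<sigma> :: real
  assumes "0 \<le> r" "r < 1 \<or> (r = 1 \<and> \<sigma> > real k)"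
  obtains g :: "nat \<Rightarrow> real" and B where "\<And>x. g x \<ge> 0" "g summable_on UNIV"
    "\<And>m. length m = k \<Longrightarrow> r ^ sum_list m * (real (sum_list m) + 1) powr (- \<sigma>) \<le> B * prod_list (map g m)"
proof (cases "r < 1")
  case True
  then obtain B \<rho> where \<rho>: "0 < \<rho>" "\<rho> < 1" and B: "\<And>n. r ^ n * (real n + 1) powr (- \<sigma>) \<le> B * \<rho> ^ n"
    using power_times_powr_le_geometric[OF \<open>0 \<le> r\<close>] by blast
  have "(\<lambda>n. \<rho> ^ n) summable_on UNIV"
    using \<rho> by (subst summable_on_UNIV_nonneg_real_iff) (auto intro: summable_geometric)
  moreover have "prod_list (map (\<lambda>n. \<rho> ^ n) m) = \<rho> ^ sum_list m" for m
    by (induction m) (auto simp: power_add)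
  ultimately show ?thesis
    using that[of "\<lambda>n. \<rho> ^ n" B] B \<rho> by auto
next
  case False
  with assms have r: "r = 1" and \<sigma>: "\<sigma> > real k" by auto
  define t where "t = (\<sigma> + 1) / (real k + 1)"
  have t: "t > 1" "t * real k \<le> \<sigma>"
    using \<sigma> by (auto simp: t_def field_simps)
  have "summable (\<lambda>n. real (Suc n) powr (- t))"
    using t by (subst summable_Suc_iff) (auto simp: summable_real_powr_iff)
  then have "(\<lambda>n. (real n + 1) powr (- t)) summable_on UNIV"
    by (subst summable_on_UNIV_nonneg_real_iff) (auto simp: add.commute)
  then show ?thesis
    using that[of "\<lambda>n. (real n + 1) powr (- t)" 1] powr_sum_list_le_prod_list[of t] t r by auto
qed

lemma Phi_summable:
  fixes z s a :: complex
  assumes "a \<notin> \<int>\<^sub>\<le>\<^sub>0" "norm z < 1 \<or> (norm z = 1 \<and> Re s > real k)"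
  shows "(\<lambda>m. z ^ sum_list m / (of_nat (sum_list m) + a) powr s) summable_on {m::nat list. length m = k}"
proof -
  obtain C where "C \<ge> 0" and C:
    "\<And>n. norm (z ^ n / (of_nat n + a) powr s) \<le> C * (norm z ^ n * (real n + 1) powr (- Re s))"
    using norm_Lerch_term_le[OF assms(1)] by blast
  obtain g :: "nat \<Rightarrow> real" and B where g: "\<And>x. g x \<ge> 0" "g summable_on UNIV" and B:
    "\<And>m. length m = k \<Longrightarrow> norm z ^ sum_list m * (real (sum_list m) + 1) powr (- Re s) \<le> B * prod_list (map g m)"
    using prod_list_majorant[of "norm z" k "Re s"] assms(2) by auto
  have "(\<lambda>m. prod_list (map g m)) summable_on {m. length m = k}"
    using has_sum_prod_list_lists_length[of g, OF g(1) has_sum_infsum[OF g(2)]]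
    by (rule has_sum_imp_summable)
  then have "(\<lambda>m. C * B * prod_list (map g m)) summable_on {m. length m = k}"
    by (intro summable_on_cmult_right)
  then have "(\<lambda>m. norm (z ^ sum_list m / (of_nat (sum_list m) + a) powr s)) summable_on {m. length m = k}"
  proof (rule Infinite_Sum.abs_summable_on_comparison_test')
    fix m :: "nat list" assume "m \<in> {m. length m = k}"
    then have "C * (norm z ^ sum_list m * (real (sum_list m) + 1) powr (- Re s)) \<le> C * (B * prod_list (map g m))"
      using B \<open>C \<ge> 0\<close> by (intro mult_left_mono) auto
    then show "norm (z ^ sum_list m / (of_nat (sum_list m) + a) powr s) \<le> C * B * prod_list (map g m)"
      using C[of "sum_list m"] by (simp add: mult.assoc)
  qed
  then show ?thesis
    by (rule summable_on_iff_abs_summable_on_complex[THEN iffD2])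
qed

lemma Phi_0 [simp]: "Phi 0 z s a = 1 / a powr s"
proof -
  have "{m :: nat list. length m = 0} = {[]}" by auto
  then show ?thesis by (simp add: Phi_def)
qed

lemma infsum_Lerch_term_fill_mask:
  fixes z s a :: complex and b :: "bool list"
  defines "j \<equiv> count_list b True"
  shows "(\<Sum>\<^sub>\<infinity>ms\<in>{ms. length ms = j}. z ^ sum_list (fill_mask b ms) / (of_nat (sum_list (fill_mask b ms)) + a) powr s)
    = z ^ j * Phi j z s (a + of_nat j)"
proof -
  have "(\<Sum>\<^sub>\<infinity>ms\<in>{ms. length ms = j}. z ^ sum_list (fill_mask b ms) / (of_nat (sum_list (fill_mask b ms)) + a) powr s)
      = (\<Sum>\<^sub>\<infinity>ms\<in>{ms. length ms = j}. z ^ j * (z ^ sum_list ms / (of_nat (sum_list ms) + (a + of_nat j)) powr s))"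
    by (rule infsum_cong) (simp add: sum_list_fill_mask j_def power_add add_ac)
  then show ?thesis
    unfolding Phi_def by (simp only: infsum_cmult_right')
qed

lemma Phi_binomial_expansion:
  fixes z s a :: complex
  assumes summable: "(\<lambda>m. z ^ sum_list m / (of_nat (sum_list m) + a) powr s) summable_on {m. length m = k}"
  shows "Phi k z s a = (\<Sum>j\<le>k. of_nat (k choose j) * (z ^ j * Phi j z s (a + of_nat j)))"
proof -
  define T :: "nat list \<Rightarrow> complex" where "T m = z ^ sum_list m / (of_nat (sum_list m) + a) powr s" for m
  define S :: "(bool list \<times> nat list) set" where "S = (SIGMA b:{b. length b = k}. {ms. length ms = count_list b True})"
  have bij: "bij_betw (case_prod fill_mask) S {m. length m = k}"
    unfolding S_def by (rule bij_betw_fill_mask)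
  have "T summable_on {m. length m = k}"
    using summable by (simp add: T_def[abs_def])
  then have summable_S: "(\<lambda>(b, ms). T (fill_mask b ms)) summable_on S"
    using summable_on_reindex_bij_betw[OF bij, of T] by (simp add: case_prod_unfold)
  have "Phi k z s a = (\<Sum>\<^sub>\<infinity>m\<in>{m. length m = k}. T m)"
    by (simp add: Phi_def T_def)
  also have "\<dots> = (\<Sum>\<^sub>\<infinity>(b, ms)\<in>S. T (fill_mask b ms))"
    using infsum_reindex_bij_betw[OF bij, of T] by (simp add: case_prod_unfold)
  also have "\<dots> = (\<Sum>\<^sub>\<infinity>b\<in>{b. length b = k}. \<Sum>\<^sub>\<infinity>ms\<in>{ms. length ms = count_list b True}. T (fill_mask b ms))"
    using infsum_Sigma_banach[OF summable_S[unfolded S_def]] by (simp add: S_def)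
  also have "\<dots> = (\<Sum>b | length b = k. z ^ count_list b True * Phi (count_list b True) z s (a + of_nat (count_list b True)))"
    using finite_lists_length_eq[of "UNIV :: bool set" k]
    by (simp add: T_def infsum_Lerch_term_fill_mask)
  also have "\<dots> = (\<Sum>j\<le>k. of_nat (k choose j) * (z ^ j * Phi j z s (a + of_nat j)))"
    by (rule sum_bool_lists_count_True)
  finally show ?thesis .
qed

theorem theorem1p3:
  fixes k :: nat and z s a :: complex
  assumes "k \<ge> 1"
    and "a \<notin> \<int>\<^sub>\<le>\<^sub>0"
    and "norm z < 1 \<or> (norm z = 1 \<and> Re s > real k)"
  shows "Phi k z s a = 1 / a powr s +
    (\<Sum>r<k. of_nat (k choose r) * z ^ (k - r) * Phi (k - r) z s (a + of_nat (k - r)))"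
proof -
  have "Phi k z s a = (\<Sum>j\<le>k. of_nat (k choose j) * (z ^ j * Phi j z s (a + of_nat j)))"
    using Phi_binomial_expansion Phi_summable assms(2,3) by blast
  also have "\<dots> = (\<Sum>r\<le>k. of_nat (k choose (k - r)) * (z ^ (k - r) * Phi (k - r) z s (a + of_nat (k - r))))"
    by (subst sum.atLeastAtMost_rev[of _ 0 k, unfolded atLeast0AtMost]) simp
  also have "\<dots> = (\<Sum>r\<le>k. of_nat (k choose r) * (z ^ (k - r) * Phi (k - r) z s (a + of_nat (k - r))))"
    by (intro sum.cong refl) (simp add: binomial_symmetric[symmetric])
  also have "\<dots> = 1 / a powr s +
      (\<Sum>r<k. of_nat (k choose r) * z ^ (k - r) * Phi (k - r) z s (a + of_nat (k - r)))"
    by (simp add: lessThan_Suc_atMost[symmetric] mult.assoc)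
  finally show ?thesis .
qed

end
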